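(* Let $K>0$, $r=1/K$, and let $p:[0,L]\to\mathbb{R}^d$ be the arc length parametrisation of an open equilateral polygon of length $L$ with vertices $p(a_0),\dots,p(a_n)$, $0=a_0<\dots<a_n=L$, such that $\mathrm{maxCurv}_2(p)\le K$ and $KL\le\pi/2$. Suppose $p$ touches the sphere $\partial B_r(c)$ tangentially at its endpoint $p(0)$, i.e. $|p(0)-c|=r$ and the direction of the first edge $p(a_1)-p(a_0)$ is orthogonal to $p(0)-c$. Then $|p(a_k)-c|>r$ for all $k=1,\dots,n$.
   Context: For an open polygon $p$ with vertices $y_k=p(a_k)$, the discrete curvature at an interior vertex $y_k$ ($1\le k\le n-1$) is $\kappa_{d,2}(y_{k-1},y_k,y_{k+1})=\frac{\phi_k}{(|y_{k-1}-y_k|+|y_{k+1}-y_k|)/2}$, where $\phi_k=\measuredangle(y_k-y_{k-1},y_{k+1}-y_k)\in[0,\pi]$ is the exterior angle at $y_k$; $\mathrm{maxCurv}_2(p)$ is the maximum of $\kappa_{d,2}$ over all interior vertices. *)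

theory Defs
  imports "HOL-Analysis.Analysis"
begin

definition vangle :: "'a::euclidean_space \<Rightarrow> 'a \<Rightarrow> real" where
  "vangle u v = arccos ((u \<bullet> v) / (norm u * norm v))"

definition kappa_d2 :: "'a::euclidean_space \<Rightarrow> 'a \<Rightarrow> 'a \<Rightarrow> real" where
  "kappa_d2 x y z = vangle (y - x) (z - y) / ((norm (x - y) + norm (z - y)) / 2)"

text \<open>maxCurv_2 of the open polygon with vertices y 0, ..., y n: the maximum of
  kappa_d2 over the interior vertices 1..n-1.  All curvatures are nonnegative;
  the 0 inserted only matters (as a harmless convention) when there is no interior vertex.\<close>
definition maxCurv2 :: "(nat \<Rightarrow> 'a::euclidean_space) \<Rightarrow> nat \<Rightarrow> real" where
  "maxCurv2 y n = Max (insert 0 ((\<lambda>k. kappa_d2 (y (k - 1)) (y k) (y (k + 1))) ` {1..<n}))"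

end

theory Submission
  imports Defs
begin

text \<open>Let h = L / n be the edge length, d j the unit direction of the j-th edge and u the unit
  outward normal of the sphere at y 0.  The curvature bound says that consecutive directions make
  an angle at most K h, so by the spherical triangle inequality d j makes an angle at most j K h
  with d 0; since n K h \<le> pi / 2, the component of d j along d 0 is at least cos (j K h) and its
  component along u at least - sin (j K h).  Summing, y k - y 0 is at least as far along d 0 and
  along u as the k-th vertex of the regular polygon with edge h and turning angle K h.  That
  vertex lies on the circle of radius h / (2 sin (K h / 2)) > 1 / K tangent to the sphere at
  y 0, hence outside the sphere, and so is y k.\<close>

lemma inner_ge_cos_add:
  fixes a b d :: "'a::real_inner"
  assumes "norm a = 1" "norm b = 1" "norm d = 1"
    and "cos x \<le> a \<bullet> b" "cos z \<le> b \<bullet> d"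
    and "0 \<le> x" "0 \<le> z" "x + z \<le> pi"
  shows "cos (x + z) \<le> a \<bullet> d"
proof -
  define p where "p = a \<bullet> b"
  define q where "q = b \<bullet> d"
  have unit: "a \<bullet> a = 1" "b \<bullet> b = 1" "d \<bullet> d = 1"
    using assms(1-3) by (simp_all add: norm_eq_1)
  have p1: "\<bar>p\<bar> \<le> 1" and q1: "\<bar>q\<bar> \<le> 1"
    unfolding p_def q_def using Cauchy_Schwarz_ineq2[of a b] Cauchy_Schwarz_ineq2[of b d] assms
    by simp_all
  \<comment> \<open>Cauchy-Schwarz for the components orthogonal to b, of lengths sin (arccos p), sin (arccos q).\<close>
  have "(a - p *\<^sub>R b) \<bullet> (d - q *\<^sub>R b) = a \<bullet> d - p * q"
    by (simp add: inner_diff_left inner_diff_right unit p_def q_def inner_commute)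
  moreover have "norm (a - p *\<^sub>R b) = sqrt (1 - p\<^sup>2)" "norm (d - q *\<^sub>R b) = sqrt (1 - q\<^sup>2)"
    by (simp_all add: norm_eq_sqrt_inner inner_diff_left inner_diff_right unit p_def q_def
        inner_commute power2_eq_square)
  ultimately have "p * q - sqrt (1 - p\<^sup>2) * sqrt (1 - q\<^sup>2) \<le> a \<bullet> d"
    using Cauchy_Schwarz_ineq2[of "a - p *\<^sub>R b" "d - q *\<^sub>R b"] by (simp add: abs_le_iff)
  moreover have "cos (arccos p + arccos q) = p * q - sqrt (1 - p\<^sup>2) * sqrt (1 - q\<^sup>2)"
    using p1 q1 by (simp add: cos_add sin_arccos)
  moreover have "arccos p \<le> x" "arccos q \<le> z"
    using assms p1 q1 arccos_le_mono[of p "cos x"] arccos_le_mono[of q "cos z"]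
    by (auto simp: p_def q_def abs_le_iff arccos_cos)
  moreover have "0 \<le> arccos p" "0 \<le> arccos q"
    using p1 q1 by (auto intro!: arccos_lbound simp: abs_le_iff)
  ultimately show ?thesis
    using assms cos_monotone_0_pi_le[of "arccos p + arccos q" "x + z"] by linarith
qed

lemma orthonormal_pair_Bessel_inequality:
  fixes t u v :: "'a::real_inner"
  assumes "norm t = 1" "norm u = 1" "t \<bullet> u = 0"
  shows "(t \<bullet> v)\<^sup>2 + (u \<bullet> v)\<^sup>2 \<le> (norm v)\<^sup>2"
proof -
  have "t \<bullet> t = 1" "u \<bullet> u = 1" "u \<bullet> t = 0"
    using assms by (simp_all add: norm_eq_1 inner_commute)
  then have "(norm (v - (t \<bullet> v) *\<^sub>R t - (u \<bullet> v) *\<^sub>R u))\<^sup>2 = (norm v)\<^sup>2 - (t \<bullet> v)\<^sup>2 - (u \<bullet> v)\<^sup>2"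
    unfolding power2_norm_eq_inner
    by (simp add: inner_diff_left inner_diff_right assms(3) inner_commute algebra_simps power2_eq_square)
  then show ?thesis
    by (metis diff_diff_eq diff_ge_0_iff_ge zero_le_power2)
qed

lemma abs_inner_le_sin:
  fixes t u v :: "'a::real_inner"
  assumes "norm t = 1" "norm u = 1" "norm v = 1" "t \<bullet> u = 0"
    and "cos \<phi> \<le> t \<bullet> v" "0 \<le> \<phi>" "\<phi> \<le> pi / 2"
  shows "\<bar>u \<bullet> v\<bar> \<le> sin \<phi>"
proof -
  have "0 \<le> cos \<phi>" "0 \<le> sin \<phi>"
    using assms(6,7) by (auto intro!: cos_ge_zero sin_ge_zero)
  then have "(cos \<phi>)\<^sup>2 \<le> (t \<bullet> v)\<^sup>2"
    using assms(5) by (intro power_mono)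
  then have "(u \<bullet> v)\<^sup>2 \<le> (sin \<phi>)\<^sup>2"
    using orthonormal_pair_Bessel_inequality[OF assms(1,2,4), of v] assms(3) sin_squared_eq[of \<phi>]
    by (simp del: sin_cos_squared_add3)
  then show ?thesis
    using \<open>0 \<le> sin \<phi>\<close> by (metis abs_le_square_iff abs_of_nonneg)
qed

lemma inner_ge_cos_of_bounded_turning:
  fixes d :: "nat \<Rightarrow> 'a::real_inner"
  assumes unit: "\<And>j. j < n \<Longrightarrow> norm (d j) = 1"
    and turn: "\<And>j. Suc j < n \<Longrightarrow> cos \<theta> \<le> d j \<bullet> d (Suc j)"
    and "0 \<le> \<theta>" "real n * \<theta> \<le> pi" "j < n"
  shows "cos (real j * \<theta>) \<le> d 0 \<bullet> d j"
  using \<open>j < n\<close>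
proof (induction j)
  case 0
  then show ?case
    using unit[of 0] by (simp add: norm_eq_1)
next
  case (Suc j)
  have "real (Suc j) * \<theta> \<le> real n * \<theta>"
    using Suc.prems \<open>0 \<le> \<theta>\<close> by (intro mult_right_mono) auto
  then have "cos (real j * \<theta> + \<theta>) \<le> d 0 \<bullet> d (Suc j)"
    using Suc unit[of 0] unit[of j] unit[of "Suc j"] turn[of j] assms(3,4)
    by (intro inner_ge_cos_add[where b = "d j"]) (auto simp: algebra_simps)
  then show ?case
    by (simp add: algebra_simps)
qed

lemma cos_le_of_vangle_le:
  fixes u v :: "'a::euclidean_space"
  assumes "vangle u v \<le> \<phi>" "\<phi> \<le> pi"
  shows "cos \<phi> \<le> u \<bullet> v / (norm u * norm v)"
proof -
  define q where "q = u \<bullet> v / (norm u * norm v)"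
  have q1: "\<bar>q\<bar> \<le> 1"
    unfolding q_def using Cauchy_Schwarz_ineq2[of u v]
    by (cases "u = 0 \<or> v = 0") (auto simp: abs_mult divide_le_eq_1)
  moreover have "arccos q \<le> \<phi>"
    using assms(1) by (simp add: vangle_def q_def)
  ultimately have "cos \<phi> \<le> cos (arccos q)"
    using assms(2) by (intro cos_monotone_0_pi_le) (auto intro!: arccos_lbound simp: abs_le_iff)
  then show ?thesis
    using cos_arccos_abs[OF q1] by (simp add: q_def)
qed

lemma sin_mult_sum_cos_multiples:
  fixes x :: real
  shows "sin x * (\<Sum>j<k. cos (2 * real j * x)) = sin (real k * x) * cos (real k * x - x)"
proof (induction k)
  case (Suc k)
  have angles: "real (Suc k) * x - x = real k * x" "2 * real k * x = real k * x + real k * x"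
    "real (Suc k) * x = real k * x + x"
    by (simp_all add: algebra_simps)
  have "sin x * (\<Sum>j<Suc k. cos (2 * real j * x))
      = sin x * cos (2 * real k * x) + sin (real k * x) * cos (real k * x - x)"
    using Suc by (simp add: distrib_left)
  also have "\<dots> = sin (real (Suc k) * x) * cos (real (Suc k) * x - x)"
    unfolding angles(1) unfolding angles(2,3) sin_add cos_add sin_diff cos_diff
    by (simp add: algebra_simps)
  finally show ?case .
qed simp

lemma sin_mult_sum_sin_multiples:
  fixes x :: real
  shows "sin x * (\<Sum>j<k. sin (2 * real j * x)) = sin (real k * x) * sin (real k * x - x)"
proof (induction k)
  case (Suc k)
  have angles: "real (Suc k) * x - x = real k * x" "2 * real k * x = real k * x + real k * x"
    "real (Suc k) * x = real k * x + x"
    by (simp_all add: algebra_simps)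
  have "sin x * (\<Sum>j<Suc k. sin (2 * real j * x))
      = sin x * sin (2 * real k * x) + sin (real k * x) * sin (real k * x - x)"
    using Suc by (simp add: distrib_left)
  also have "\<dots> = sin (real (Suc k) * x) * sin (real (Suc k) * x - x)"
    unfolding angles(1) unfolding angles(2,3) sin_add cos_add sin_diff cos_diff
    by (simp add: algebra_simps)
  finally show ?case .
qed simp

text \<open>(h A, - h B) is the k-th vertex of the regular polygon with edge h and turning angle
  2 x, in coordinates along its first edge and its outward normal at the start point.\<close>
lemma sum_cos_sin_multiples_bounds:
  fixes x :: real and k :: nat
  assumes "0 < x" "1 \<le> k" "real k * x \<le> pi / 4"
  defines "A \<equiv> \<Sum>j<k. cos (2 * real j * x)" and "B \<equiv> \<Sum>j<k. sin (2 * real j * x)"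
  shows "B < x * (A\<^sup>2 + B\<^sup>2)" "B \<le> A" "0 < A" "0 \<le> B"
proof -
  define s where "s = sin x"
  define S where "S = sin (real k * x)"
  define P where "P = sin (real k * x - x)"
  define Q where "Q = cos (real k * x - x)"
  define R where "R = S / s"
  have "x \<le> real k * x"
    using assms(1,2) by simp
  then have angles: "0 \<le> real k * x - x" "real k * x - x < real k * x" "real k * x < pi / 2" "x < pi"
    using assms(1,3) pi_gt_zero by linarith+
  have "0 < s" "s \<le> x"
    using assms(1) angles by (auto simp: s_def intro!: sin_gt_zero sin_x_le_x)
  have "0 < S" "0 \<le> P" "P < S" "0 < Q"
    unfolding S_def P_def Q_def using angles pi_gt_zero
    by (intro sin_gt_zero sin_ge_zero sin_monotone_2pi cos_gt_zero_pi; linarith)+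
  have "P \<le> sin (pi / 2 - (real k * x - x))"
    unfolding P_def using angles assms(3) by (intro sin_monotone_2pi_le) linarith+
  then have "P \<le> Q"
    by (simp add: Q_def sin_cos_eq)
  have "0 < R"
    using \<open>0 < s\<close> \<open>0 < S\<close> by (simp add: R_def)
  have A: "A = R * Q" and B: "B = R * P"
    using sin_mult_sum_cos_multiples[of x k] sin_mult_sum_sin_multiples[of x k] \<open>0 < s\<close>
    by (simp_all add: A_def B_def R_def S_def P_def Q_def s_def nonzero_eq_divide_eq mult.commute)
  show "B \<le> A" "0 < A" "0 \<le> B"
    unfolding A B using \<open>0 < R\<close> \<open>P \<le> Q\<close> \<open>0 < Q\<close> \<open>0 \<le> P\<close> by simp_all
  have "s * P < x * S"
    using \<open>0 < s\<close> \<open>s \<le> x\<close> \<open>0 < S\<close> \<open>P < S\<close>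
    by (meson less_le_trans mult_less_cancel_left_pos mult_right_mono order.strict_implies_order)
  then have "P < x * R"
    using \<open>0 < s\<close> by (simp add: R_def pos_less_divide_eq mult.commute)
  moreover have "A\<^sup>2 + B\<^sup>2 = R\<^sup>2"
    unfolding A B power_mult_distrib P_def Q_def
    by (simp flip: distrib_left)
  ultimately show "B < x * (A\<^sup>2 + B\<^sup>2)"
    unfolding B using \<open>0 < R\<close> by (simp add: power2_eq_square)
qed

lemma outside_circle_mono:
  fixes a b \<alpha> \<beta> r :: real
  assumes "\<alpha> \<le> a" "- \<beta> \<le> b" "0 \<le> \<beta>" "\<beta> \<le> \<alpha>" "0 < r" "2 * r * \<beta> < \<alpha>\<^sup>2 + \<beta>\<^sup>2"
  shows "0 < a\<^sup>2 + b\<^sup>2 + 2 * r * b"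
proof -
  have "\<alpha>\<^sup>2 \<le> a\<^sup>2"
    using assms(1,3,4) by (intro power_mono) auto
  have expand: "a\<^sup>2 + b\<^sup>2 + 2 * r * b = a\<^sup>2 + (b + r)\<^sup>2 - r\<^sup>2"
    by (simp add: power2_sum)
  show ?thesis
  proof (cases "\<beta> \<le> r")
    case True
    then have "(r - \<beta>)\<^sup>2 \<le> (b + r)\<^sup>2"
      using assms(2) by (intro power_mono) auto
    moreover have "(r - \<beta>)\<^sup>2 = \<beta>\<^sup>2 - 2 * r * \<beta> + r\<^sup>2"
      by (simp add: power2_diff)
    ultimately show ?thesis
      using \<open>\<alpha>\<^sup>2 \<le> a\<^sup>2\<close> assms(6) expand by linarith
  next
    case False
    then have "r\<^sup>2 < \<alpha>\<^sup>2"
      using assms(4,5) by (intro power_strict_mono) auto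
    then show ?thesis
      using \<open>\<alpha>\<^sup>2 \<le> a\<^sup>2\<close> expand zero_le_power2[of "b + r"] by linarith
  qed
qed

lemma norm_add_scaleR_unit_gt:
  fixes t u w :: "'a::real_inner"
  assumes "norm t = 1" "norm u = 1" "t \<bullet> u = 0" "0 < r"
    and "0 < (t \<bullet> w)\<^sup>2 + (u \<bullet> w)\<^sup>2 + 2 * r * (u \<bullet> w)"
  shows "r < norm (w + r *\<^sub>R u)"
proof -
  have "(norm (w + r *\<^sub>R u))\<^sup>2 = (norm w)\<^sup>2 + 2 * r * (u \<bullet> w) + r\<^sup>2"
    using assms(2) unfolding power2_norm_eq_inner
    by (simp add: inner_add_left inner_add_right inner_commute norm_eq_1 power2_eq_square algebra_simps)
  then have "r\<^sup>2 < (norm (w + r *\<^sub>R u))\<^sup>2"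
    using orthonormal_pair_Bessel_inequality[OF assms(1-3), of w] assms(5) by linarith
  then show ?thesis
    by (rule power2_less_imp_less) simp
qed

lemma polygon_with_bounded_turning_outside_tangent_sphere:
  fixes y d :: "nat \<Rightarrow> 'a::real_inner" and c :: 'a
  assumes "0 < K" "0 < h"
    and edge: "\<And>j. j < n \<Longrightarrow> y (Suc j) - y j = h *\<^sub>R d j"
    and unit: "\<And>j. j < n \<Longrightarrow> norm (d j) = 1"
    and turn: "\<And>j. Suc j < n \<Longrightarrow> cos (K * h) \<le> d j \<bullet> d (Suc j)"
    and total_turn: "real n * (K * h) \<le> pi / 2"
    and "norm (y 0 - c) = 1 / K" "d 0 \<bullet> (y 0 - c) = 0"
    and "1 \<le> k" "k \<le> n"
  shows "1 / K < norm (y k - c)"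
proof -
  define x where "x = K * h / 2"
  define u where "u = K *\<^sub>R (y 0 - c)"
  define w where "w = y k - y 0"
  define A where "A = (\<Sum>j<k. cos (2 * real j * x))"
  define B where "B = (\<Sum>j<k. sin (2 * real j * x))"
  have "0 < x"
    using assms(1,2) by (simp add: x_def)
  have "real k * x \<le> real n * x"
    using \<open>k \<le> n\<close> \<open>0 < x\<close> by (simp add: mult_right_mono)
  moreover have "real n * x = real n * (K * h) / 2"
    by (simp add: x_def)
  ultimately have "real k * x \<le> pi / 4"
    using total_turn by linarith
  have turning_bounds: "0 \<le> K * h" "real n * (K * h) \<le> pi"
    using assms(1,2) total_turn pi_gt_zero by (simp, linarith)
  have "norm (d 0) = 1"
    using unit assms(9,10) by simp
  have "norm u = 1" "d 0 \<bullet> u = 0"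
    using assms(1,7,8) by (simp_all add: u_def)
  have angle: "0 \<le> 2 * real j * x" "2 * real j * x \<le> pi / 2" if "j < k" for j
  proof -
    have "real j * x \<le> real k * x"
      using that \<open>0 < x\<close> by (simp add: mult_right_mono)
    then show "2 * real j * x \<le> pi / 2"
      using \<open>real k * x \<le> pi / 4\<close> by linarith
    show "0 \<le> 2 * real j * x"
      using \<open>0 < x\<close> by simp
  qed
  have along: "cos (2 * real j * x) \<le> d 0 \<bullet> d j" if "j < k" for j
    using inner_ge_cos_of_bounded_turning[where n = n and d = d, OF unit turn turning_bounds, of j]
      that \<open>k \<le> n\<close>
    by (simp add: x_def algebra_simps)
  have across: "- sin (2 * real j * x) \<le> u \<bullet> d j" if "j < k" for j
    using abs_inner_le_sin[OF unit \<open>norm u = 1\<close> unit \<open>d 0 \<bullet> u = 0\<close> along[OF that] angle[OF that]]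
      that \<open>k \<le> n\<close> by (simp add: abs_le_iff)
  have w: "w = h *\<^sub>R (\<Sum>j<k. d j)"
    unfolding w_def sum_lessThan_telescope[symmetric] scaleR_sum_right
    using edge \<open>k \<le> n\<close> by (intro sum.cong) auto
  have "A \<le> (\<Sum>j<k. d 0 \<bullet> d j)"
    unfolding A_def by (intro sum_mono along) simp
  then have a: "h * A \<le> d 0 \<bullet> w"
    unfolding w using assms(2) by (simp add: inner_sum_right)
  have "- B \<le> (\<Sum>j<k. u \<bullet> d j)"
    unfolding B_def sum_negf[symmetric] by (intro sum_mono across) simp
  then have b: "- (h * B) \<le> u \<bullet> w"
    unfolding w using mult_left_mono[of "- B" _ h] assms(2) by (simp add: inner_sum_right)
  note bounds = sum_cos_sin_multiples_bounds[OF \<open>0 < x\<close> \<open>1 \<le> k\<close> \<open>real k * x \<le> pi / 4\<close>,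
      folded A_def B_def]
  have "2 * B < K * h * (A\<^sup>2 + B\<^sup>2)"
    using bounds(1) by (simp add: x_def)
  then have "h * (2 * B) < h * (K * h * (A\<^sup>2 + B\<^sup>2))"
    using assms(2) by simp
  then have "2 * (1 / K) * (h * B) < (h * A)\<^sup>2 + (h * B)\<^sup>2"
    using assms(1) by (simp add: field_simps power2_eq_square)
  then have "0 < (d 0 \<bullet> w)\<^sup>2 + (u \<bullet> w)\<^sup>2 + 2 * (1 / K) * (u \<bullet> w)"
    using a b bounds(2-) assms(1,2) by (intro outside_circle_mono) auto
  then have "1 / K < norm (w + (1 / K) *\<^sub>R u)"
    using norm_add_scaleR_unit_gt[OF \<open>norm (d 0) = 1\<close> \<open>norm u = 1\<close> \<open>d 0 \<bullet> u = 0\<close>] assms(1)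
    by auto
  moreover have "w + (1 / K) *\<^sub>R u = y k - c"
    using assms(1) by (simp add: w_def u_def)
  ultimately show ?thesis
    by simp
qed

lemma kappa_d2_le_maxCurv2:
  assumes "0 < k" "k < n"
  shows "kappa_d2 (y (k - 1)) (y k) (y (k + 1)) \<le> maxCurv2 y n"
  unfolding maxCurv2_def using assms by (intro Max_ge) auto

lemma cos_le_inner_of_kappa_d2_le:
  fixes x y z :: "'a::euclidean_space"
  assumes "norm (y - x) = h" "norm (z - y) = h" "0 < h"
    and "kappa_d2 x y z \<le> K" "K * h \<le> pi"
  shows "cos (K * h) \<le> ((1 / h) *\<^sub>R (y - x)) \<bullet> ((1 / h) *\<^sub>R (z - y))"
proof -
  have "kappa_d2 x y z = vangle (y - x) (z - y) / h"
    using assms(1,2) by (simp add: kappa_d2_def norm_minus_commute)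
  then have "vangle (y - x) (z - y) \<le> K * h"
    using assms(3,4) by (simp add: divide_le_eq mult.commute)
  then show ?thesis
    using cos_le_of_vangle_le[of "y - x" "z - y" "K * h"] assms(1,2,5)
    by (simp add: power2_eq_square)
qed

theorem corollary7:
  fixes y :: "nat \<Rightarrow> 'a::euclidean_space" and n :: nat and L K :: real and c :: 'a
  assumes "K > 0"
    and "n \<ge> 1"
    and "L > 0"
    and "\<forall>k<n. norm (y (Suc k) - y k) = L / real n"
    and "maxCurv2 y n \<le> K"
    and "K * L \<le> pi / 2"
    and "norm (y 0 - c) = 1 / K"
    and "(y 1 - y 0) \<bullet> (y 0 - c) = 0"
  shows "\<forall>k\<in>{1..n}. norm (y k - c) > 1 / K"
proof -
  define h where "h = L / real n"
  define d where "d j = (1 / h) *\<^sub>R (y (Suc j) - y j)" for j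
  have "0 < h" and total_turn: "real n * (K * h) = K * L"
    using assms(2,3) by (simp_all add: h_def)
  moreover have "K * h \<le> real n * (K * h)"
    using assms(2) mult_pos_pos[OF assms(1) \<open>0 < h\<close>] by (simp add: mult_le_cancel_right1)
  ultimately have "K * h \<le> pi"
    using assms(6) pi_gt_zero by linarith
  have edge: "y (Suc j) - y j = h *\<^sub>R d j" for j
    using \<open>0 < h\<close> by (simp add: d_def)
  have unit: "norm (d j) = 1" if "j < n" for j
    using assms(3,4) that \<open>0 < h\<close> by (simp add: d_def h_def)
  have turn: "cos (K * h) \<le> d j \<bullet> d (Suc j)" if "Suc j < n" for j
    using cos_le_inner_of_kappa_d2_le[where x = "y j" and y = "y (Suc j)" and z = "y (Suc (Suc j))",
        OF _ _ \<open>0 < h\<close> _ \<open>K * h \<le> pi\<close>]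
      kappa_d2_le_maxCurv2[of "Suc j" n y] assms(4,5) that
    by (simp add: d_def h_def)
  have "d 0 \<bullet> (y 0 - c) = 0"
    using assms(8) by (simp add: d_def)
  then show ?thesis
    using polygon_with_bounded_turning_outside_tangent_sphere[where n = n and d = d and y = y,
        OF assms(1) \<open>0 < h\<close> edge unit turn]
      total_turn assms(1,6,7) by auto
qed

end
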